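(* Let $A$, $Q$ and $H\subseteq A^Q$ be non-empty finite sets and $\mathcal F$ a clone with carrier $A$ satisfying $\Delta^2$. Then $H\in\mathrm{Inv}_Q\mathcal F$ if and only if both of the following hold: (1) $H|_P\in\mathrm{Inv}_P\mathcal F$ for all $P\in[Q]^1\cup\{Q^{[B]}_H: B\in[A]^2\}$; (2) $H$ is decomposable over $[Q]^1\cup[Q]^{2,id}_H\cup\{Q^{[B]}_H:B\in[A]^2\}$.
   Context: $\mathcal O(A)=\bigcup_{n<\omega}A^{A^n}$; $\mathcal F_{[n]}=\mathcal F\cap A^{A^n}$. $A^2_2$ is the set of pairs $\mathbf a=a_0a_1\in A^2$ with $a_0\ne a_1$, $\mathrm{ran}\,\mathbf a=\{a_0,a_1\}$. A clone with carrier $A$ is a subset of $\mathcal O(A)$ containing all projections and closed under composition. For $f\in\mathcal O(A)_{[m]}$, $h_i\in A^Q$, $f(h_0,\dots,h_{m-1})$ is $q\mapsto f(h_0(q)\dots h_{m-1}(q))$; $\mathrm{Inv}_Q\mathcal F$ is the set of $H\subseteq A^Q$ closed under such compositions with $f\in\mathcal F$. $h|_P$ is the restriction of $h$ to $P\cap\mathrm{dom}\,h$, $H|_P=\{h|_P:h\in H\}$, $H(q)=\{h(q):h\in H\}$. For $R\subseteq Q$, $(H|_R)|^Q=\{f\in A^Q:f|_R\in H|_R\}$; $H$ is decomposable over $\mathscr R\subseteq\mathscr P(Q)$ if $H=\bigcap_{R\in\mathscr R}(H|_R)|^Q$. $[X]^k$ is the set of $k$-element subsets of $X$. $[Q]^{2,id}_H$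 is the set of $\{p,q\}\in[Q]^2$ with $h(p)=h(q)$ for all $h\in H$. For $B\subseteq A$, $Q^{[B]}_H=\{q\in Q: H(q)\subseteq B\}$. $\mathcal F$ satisfies $\Delta^2$ if for all $\mathbf a,\mathbf b\in A^2_2$ with $\mathrm{ran}\,\mathbf a\ne\mathrm{ran}\,\mathbf b$ and all $a\in\mathrm{ran}\,\mathbf a$, $b\in\mathrm{ran}\,\mathbf b$, there is $w\in\mathcal F_{[2]}$ with $w(\mathbf a)=a$, $w(\mathbf b)=b$ and $w(xx)=x$ for all $x\in A$. *)

theory Defs
  imports "HOL-Library.FuncSet"
begin

(* An n-ary operation on A is an element of A^(A^n), i.e. an extensional function
 from ({0..<n} ->E A) to A.  Operations are tagged with their arity. *)

definition ops :: "'a set \<Rightarrow> nat \<Rightarrow> ((nat \<Rightarrow> 'a) \<Rightarrow> 'a) set" where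
  "ops A n = ({0..<n} \<rightarrow>\<^sub>E A) \<rightarrow>\<^sub>E A"

definition OA :: "'a set \<Rightarrow> (nat \<times> ((nat \<Rightarrow> 'a) \<Rightarrow> 'a)) set" where
  "OA A = {(n, f). f \<in> ops A n}"

definition proj :: "'a set \<Rightarrow> nat \<Rightarrow> nat \<Rightarrow> ((nat \<Rightarrow> 'a) \<Rightarrow> 'a)" where
  "proj A n i = (\<lambda>x\<in>{0..<n} \<rightarrow>\<^sub>E A. x i)"

definition comp_op :: "'a set \<Rightarrow> nat \<Rightarrow> ((nat \<Rightarrow> 'a) \<Rightarrow> 'a) \<Rightarrow> nat
    \<Rightarrow> (nat \<Rightarrow> (nat \<Rightarrow> 'a) \<Rightarrow> 'a) \<Rightarrow> ((nat \<Rightarrow> 'a) \<Rightarrow> 'a)" where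
  "comp_op A m f n g = (\<lambda>x\<in>{0..<n} \<rightarrow>\<^sub>E A. f (\<lambda>i\<in>{0..<m}. g i x))"

definition clone :: "'a set \<Rightarrow> (nat \<times> ((nat \<Rightarrow> 'a) \<Rightarrow> 'a)) set \<Rightarrow> bool" where
  "clone A F \<longleftrightarrow> F \<subseteq> OA A
     \<and> (\<forall>n i. i < n \<longrightarrow> (n, proj A n i) \<in> F)
     \<and> (\<forall>m f n g. (m, f) \<in> F \<and> (\<forall>i<m. (n, g i) \<in> F) \<longrightarrow> (n, comp_op A m f n g) \<in> F)"

definition arity_part :: "(nat \<times> ((nat \<Rightarrow> 'a) \<Rightarrow> 'a)) set \<Rightarrow> nat \<Rightarrow> ((nat \<Rightarrow> 'a) \<Rightarrow> 'a) set" where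
  "arity_part F n = {f. (n, f) \<in> F}"

definition apply_op :: "'q set \<Rightarrow> nat \<Rightarrow> ((nat \<Rightarrow> 'a) \<Rightarrow> 'a) \<Rightarrow> (nat \<Rightarrow> 'q \<Rightarrow> 'a) \<Rightarrow> ('q \<Rightarrow> 'a)" where
  "apply_op Q m f hs = (\<lambda>q\<in>Q. f (\<lambda>i\<in>{0..<m}. hs i q))"

definition Inv :: "'a set \<Rightarrow> 'q set \<Rightarrow> (nat \<times> ((nat \<Rightarrow> 'a) \<Rightarrow> 'a)) set \<Rightarrow> ('q \<Rightarrow> 'a) set set" where
  "Inv A Q F = {H. H \<subseteq> (Q \<rightarrow>\<^sub>E A) \<and>
     (\<forall>m f hs. (m, f) \<in> F \<and> (\<forall>i<m. hs i \<in> H) \<longrightarrow> apply_op Q m f hs \<in> H)}"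

definition restr_set :: "('q \<Rightarrow> 'a) set \<Rightarrow> 'q set \<Rightarrow> ('q \<Rightarrow> 'a) set" where
  "restr_set H P = (\<lambda>h. restrict h P) ` H"

definition ext_set :: "'a set \<Rightarrow> 'q set \<Rightarrow> ('q \<Rightarrow> 'a) set \<Rightarrow> 'q set \<Rightarrow> ('q \<Rightarrow> 'a) set" where
  "ext_set A Q H R = {f \<in> Q \<rightarrow>\<^sub>E A. restrict f R \<in> restr_set H R}"

definition decomposable :: "'a set \<Rightarrow> 'q set \<Rightarrow> ('q \<Rightarrow> 'a) set \<Rightarrow> 'q set set \<Rightarrow> bool" where
  "decomposable A Q H RR \<longleftrightarrow> H = (Q \<rightarrow>\<^sub>E A) \<inter> (\<Inter>R\<in>RR. ext_set A Q H R)"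

definition ksubsets :: "'b set \<Rightarrow> nat \<Rightarrow> 'b set set" where
  "ksubsets X k = {Y. Y \<subseteq> X \<and> finite Y \<and> card Y = k}"

definition id_pairs :: "'q set \<Rightarrow> ('q \<Rightarrow> 'a) set \<Rightarrow> 'q set set" where
  "id_pairs Q H = {P \<in> ksubsets Q 2. \<forall>p\<in>P. \<forall>q\<in>P. \<forall>h\<in>H. h p = h q}"

definition vals :: "('q \<Rightarrow> 'a) set \<Rightarrow> 'q \<Rightarrow> 'a set" where
  "vals H q = (\<lambda>h. h q) ` H"

definition QB :: "'q set \<Rightarrow> ('q \<Rightarrow> 'a) set \<Rightarrow> 'a set \<Rightarrow> 'q set" where
  "QB Q H B = {q \<in> Q. vals H q \<subseteq> B}"

definition tup2 :: "'a \<Rightarrow> 'a \<Rightarrow> nat \<Rightarrow> 'a" where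
  "tup2 x y = (\<lambda>i\<in>{0..<2::nat}. if i = 0 then x else y)"

definition Delta2 :: "'a set \<Rightarrow> (nat \<times> ((nat \<Rightarrow> 'a) \<Rightarrow> 'a)) set \<Rightarrow> bool" where
  "Delta2 A F \<longleftrightarrow>
    (\<forall>a0\<in>A. \<forall>a1\<in>A. \<forall>b0\<in>A. \<forall>b1\<in>A.
      a0 \<noteq> a1 \<and> b0 \<noteq> b1 \<and> {a0, a1} \<noteq> {b0, b1} \<longrightarrow>
      (\<forall>a\<in>{a0, a1}. \<forall>b\<in>{b0, b1}. \<exists>w\<in>arity_part F 2.
         w (tup2 a0 a1) = a \<and> w (tup2 b0 b1) = b \<and> (\<forall>x\<in>A. w (tup2 x x) = x)))"

end

theory Submission
  imports Defs
begin

text \<open>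
  The substance is the converse of decomposability: every \<open>f \<in> A\<^sup>Q\<close> whose restrictions to
  all pieces lie in the corresponding restrictions of \<open>H\<close> already lies in \<open>H\<close>.  Take a minimal
  counterexample \<open>f\<close> on \<open>S \<subseteq> Q\<close>.  For each \<open>p \<in> S\<close> some \<open>h\<^sub>p \<in> H\<close> agrees with \<open>f\<close> off \<open>p\<close>,
  and applying a \<open>\<Delta>\<^sup>2\<close>-operation to \<open>h\<^sub>p, h\<^sub>q\<close> shows that all pairs \<open>{h\<^sub>p p, f p}\<close> are one and the
  same two-element set \<open>B\<close>.  As \<open>f\<close> is realised on \<open>Q\<^sup>[\<^sup>B\<^sup>]\<^sub>H \<inter> S\<close>, some \<open>g \<in> H\<close> takes a value
  \<open>c \<notin> B\<close> at some \<open>r \<in> S\<close>; changing \<open>f\<close> to \<open>c\<close> at \<open>r\<close> yields another minimal counterexample,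
  which forces \<open>f\<close> to be constant off \<open>r\<close>, and doing this at two points leaves only \<open>|S| = 2\<close>,
  where three constant elements of \<open>H\<close> and \<open>\<Delta>\<^sup>2\<close> produce \<open>f\<close> itself.
\<close>

lemma InvI:
  "H \<subseteq> Q \<rightarrow>\<^sub>E A \<Longrightarrow> (\<And>m f hs. (m, f) \<in> F \<Longrightarrow> \<forall>i<m. hs i \<in> H \<Longrightarrow> apply_op Q m f hs \<in> H)
    \<Longrightarrow> H \<in> Inv A Q F"
  unfolding Inv_def by blast

lemma Inv_subset_PiE: "H \<in> Inv A Q F \<Longrightarrow> H \<subseteq> Q \<rightarrow>\<^sub>E A"
  unfolding Inv_def by blast

lemma Inv_apply_op: "H \<in> Inv A Q F \<Longrightarrow> (m, f) \<in> F \<Longrightarrow> \<forall>i<m. hs i \<in> H \<Longrightarrow> apply_op Q m f hs \<in> H"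
  unfolding Inv_def by blast

lemma restrict_apply_op:
  "R \<subseteq> Q \<Longrightarrow> restrict (apply_op Q m f hs) R = apply_op R m f (\<lambda>i. restrict (hs i) R)"
  unfolding apply_op_def by (rule ext) (auto intro!: arg_cong[where f=f] restrict_ext)

lemma apply_op_cong:
  "(\<And>i. i < m \<Longrightarrow> hs i = hs' i) \<Longrightarrow> apply_op P m f hs = apply_op P m f hs'"
  unfolding apply_op_def by (auto intro!: arg_cong[where f=f] restrict_ext)

lemma apply_op_in_PiE:
  assumes "F \<subseteq> OA A" "(m, f) \<in> F" "\<forall>i<m. hs i \<in> Q \<rightarrow>\<^sub>E A"
  shows "apply_op Q m f hs \<in> Q \<rightarrow>\<^sub>E A"
  unfolding apply_op_def
proof (rule restrict_PiE_iff[THEN iffD2], intro ballI)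
  fix q assume "q \<in> Q"
  then have "(\<lambda>i\<in>{0..<m}. hs i q) \<in> {0..<m} \<rightarrow>\<^sub>E A"
    using assms(3) by auto
  moreover have "f \<in> ({0..<m} \<rightarrow>\<^sub>E A) \<rightarrow>\<^sub>E A"
    using assms(1,2) unfolding OA_def ops_def by blast
  ultimately show "f (\<lambda>i\<in>{0..<m}. hs i q) \<in> A" by (rule PiE_mem[rotated])
qed

lemma restr_set_obtain_lifts:
  assumes "\<forall>i<m. hs i \<in> restr_set H P"
  obtains hs' where "\<And>i. i < m \<Longrightarrow> hs' i \<in> H \<and> hs i = restrict (hs' i) P"
proof -
  have "\<forall>i. \<exists>h. i < m \<longrightarrow> h \<in> H \<and> hs i = restrict h P"
    using assms unfolding restr_set_def by blast
  then show ?thesis using that by metis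
qed

lemma restr_set_subset_PiE:
  assumes "H \<subseteq> Q \<rightarrow>\<^sub>E A" "P \<subseteq> Q"
  shows "restr_set H P \<subseteq> P \<rightarrow>\<^sub>E A"
  using assms unfolding restr_set_def by (force simp: restrict_PiE_iff intro: PiE_mem)

lemma Inv_restr_set:
  assumes inv: "H \<in> Inv A Q F" and PQ: "P \<subseteq> Q"
  shows "restr_set H P \<in> Inv A P F"
proof (rule InvI)
  show "restr_set H P \<subseteq> P \<rightarrow>\<^sub>E A"
    by (rule restr_set_subset_PiE[OF Inv_subset_PiE[OF inv] PQ])
  fix m f hs assume mf: "(m, f) \<in> F" and hs: "\<forall>i<m. hs i \<in> restr_set H P"
  obtain hs' where hs': "\<And>i. i < m \<Longrightarrow> hs' i \<in> H \<and> hs i = restrict (hs' i) P"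
    using restr_set_obtain_lifts[OF hs] by blast
  have "apply_op Q m f hs' \<in> H" using Inv_apply_op[OF inv mf] hs' by blast
  moreover have "restrict (apply_op Q m f hs') P = apply_op P m f hs"
    unfolding restrict_apply_op[OF PQ] by (rule apply_op_cong) (use hs' in simp)
  ultimately show "apply_op P m f hs \<in> restr_set H P" unfolding restr_set_def by (metis image_eqI)
qed

text \<open>The pieces \<open>{p, q}\<close> of \<open>[Q]\<^sup>2\<^sup>,\<^sup>i\<^sup>d\<^sub>H\<close> need no invariance hypothesis of their own.\<close>

lemma Inv_restr_set_identified_pair:
  assumes inv_p: "restr_set H {p} \<in> Inv A {p} F" and HQ: "H \<subseteq> Q \<rightarrow>\<^sub>E A"
    and "p \<in> Q" "q \<in> Q" and pq: "\<forall>h\<in>H. h p = h q"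
  shows "restr_set H {p, q} \<in> Inv A {p, q} F"
proof (rule InvI)
  show "restr_set H {p, q} \<subseteq> {p, q} \<rightarrow>\<^sub>E A"
    using restr_set_subset_PiE[OF HQ, of "{p, q}"] assms(3,4) by simp
  show "apply_op {p, q} m f hs \<in> restr_set H {p, q}"
    if mf: "(m, f) \<in> F" and hs: "\<forall>i<m. hs i \<in> restr_set H {p, q}" for m f hs
  proof -
    obtain hs' where hs': "\<And>i. i < m \<Longrightarrow> hs' i \<in> H \<and> hs i = restrict (hs' i) {p, q}"
      using restr_set_obtain_lifts[OF hs] by blast
    have "\<forall>i<m. restrict (hs' i) {p} \<in> restr_set H {p}"
      using hs' unfolding restr_set_def by blast
    then have "apply_op {p} m f (\<lambda>i. restrict (hs' i) {p}) \<in> restr_set H {p}"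
      by (rule Inv_apply_op[OF inv_p mf])
    then obtain h where h: "h \<in> H" "apply_op {p} m f (\<lambda>i. restrict (hs' i) {p}) = restrict h {p}"
      unfolding restr_set_def by blast
    have hp: "f (\<lambda>i\<in>{0..<m}. hs' i p) = h p"
      using fun_cong[OF h(2), of p] unfolding apply_op_def by simp
    have "hs i x = hs' i p" if "i < m" "x \<in> {p, q}" for i x
      using hs'[OF that(1)] pq[rule_format, of "hs' i"] that(2) by auto
    then have "(\<lambda>i\<in>{0..<m}. hs i x) = (\<lambda>i\<in>{0..<m}. hs' i p)" if "x \<in> {p, q}" for x
      using that by (intro restrict_ext) simp
    then have "f (\<lambda>i\<in>{0..<m}. hs i x) = h x" if "x \<in> {p, q}" for x
      using hp that pq h(1) by auto
    then have "apply_op {p, q} m f hs = restrict h {p, q}"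
      unfolding apply_op_def by (intro restrict_ext) simp
    then show ?thesis using h(1) unfolding restr_set_def by blast
  qed
qed

lemma Inv_if_decomposable:
  assumes FA: "F \<subseteq> OA A" and HQ: "H \<subseteq> Q \<rightarrow>\<^sub>E A" and dec: "decomposable A Q H RR"
    and pieces: "\<And>R. R \<in> RR \<Longrightarrow> R \<subseteq> Q \<and> restr_set H R \<in> Inv A R F"
  shows "H \<in> Inv A Q F"
proof (rule InvI[OF HQ])
  show "apply_op Q m f hs \<in> H" if mf: "(m, f) \<in> F" and hs: "\<forall>i<m. hs i \<in> H" for m f hs
  proof -
    have PiE: "apply_op Q m f hs \<in> Q \<rightarrow>\<^sub>E A"
      using apply_op_in_PiE[OF FA mf] hs HQ by blast
    have "apply_op Q m f hs \<in> ext_set A Q H R" if R: "R \<in> RR" for R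
    proof -
      have RQ: "R \<subseteq> Q" and inv_R: "restr_set H R \<in> Inv A R F" using pieces[OF R] by auto
      have "\<forall>i<m. restrict (hs i) R \<in> restr_set H R" using hs unfolding restr_set_def by blast
      then have "apply_op R m f (\<lambda>i. restrict (hs i) R) \<in> restr_set H R"
        by (rule Inv_apply_op[OF inv_R mf])
      then show ?thesis using PiE restrict_apply_op[OF RQ, of m f hs] unfolding ext_set_def by simp
    qed
    with PiE show ?thesis using dec unfolding decomposable_def by blast
  qed
qed

lemma ext_set_obtain_agreeing:
  assumes "f \<in> ext_set A Q H R"
  shows "\<exists>h\<in>H. \<forall>x\<in>R. h x = f x"
proof -
  obtain h where "h \<in> H" "restrict f R = restrict h R"
    using assms unfolding ext_set_def restr_set_def by auto
  then show ?thesis by (metis restrict_apply')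
qed

lemma three_in_card_two:
  assumes "finite B" "card B = 2" "a \<in> B" "b \<in> B" "c \<in> B"
  shows "a = b \<or> a = c \<or> b = c"
proof (rule ccontr)
  assume "\<not> ?thesis"
  then have "card {a, b, c} = 3" by simp
  moreover have "card {a, b, c} \<le> card B"
    by (rule card_mono[OF assms(1)]) (simp add: assms(3-5))
  ultimately show False using assms(2) by simp
qed

text \<open>
  \<open>locally_in A Q H S f\<close> says that \<open>f|\<^sub>R \<in> H|\<^sub>R\<close> for the traces \<open>R \<inter> S\<close> of all pieces \<open>R\<close> of the
  decomposition in the theorem.
\<close>

definition locally_in :: "'a set \<Rightarrow> 'q set \<Rightarrow> ('q \<Rightarrow> 'a) set \<Rightarrow> 'q set \<Rightarrow> ('q \<Rightarrow> 'a) \<Rightarrow> bool" where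
  "locally_in A Q H S f \<longleftrightarrow> (\<forall>q\<in>S. \<exists>h\<in>H. h q = f q)
     \<and> (\<forall>p\<in>S. \<forall>q\<in>S. (\<forall>h\<in>H. h p = h q) \<longrightarrow> f p = f q)
     \<and> (\<forall>B\<in>ksubsets A 2. \<exists>h\<in>H. \<forall>x\<in>QB Q H B \<inter> S. h x = f x)"

lemma locally_in_mono: "locally_in A Q H S f \<Longrightarrow> S' \<subseteq> S \<Longrightarrow> locally_in A Q H S' f"
  unfolding locally_in_def by blast

lemma not_realized_deletion_value:
  assumes "\<not> (\<exists>h\<in>H. \<forall>x\<in>S. h x = f x)" "h \<in> H" "\<forall>x\<in>S-{p}. h x = f x"
  shows "h p \<noteq> f p"
  using assms by (metis Diff_iff singletonD)

locale Delta2_relation =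
  fixes A :: "'a set" and Q :: "'q set" and H :: "('q \<Rightarrow> 'a) set"
    and F :: "(nat \<times> ((nat \<Rightarrow> 'a) \<Rightarrow> 'a)) set"
  assumes H_sub: "H \<subseteq> Q \<rightarrow>\<^sub>E A" and H_inv: "H \<in> Inv A Q F" and Delta2: "Delta2 A F"
    and H_nonempty: "H \<noteq> {}"
begin

lemma H_value_in_A: "h \<in> H \<Longrightarrow> x \<in> Q \<Longrightarrow> h x \<in> A"
  using H_sub by (auto simp: PiE_iff)

lemma Delta2_combine:
  assumes h1: "h1 \<in> H" and h2: "h2 \<in> H" and p: "p \<in> Q" and q: "q \<in> Q"
    and ne: "h1 p \<noteq> h2 p" "h1 q \<noteq> h2 q" "{h1 p, h2 p} \<noteq> {h1 q, h2 q}"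
    and a: "a \<in> {h1 p, h2 p}" and b: "b \<in> {h1 q, h2 q}"
  shows "\<exists>h\<in>H. h p = a \<and> h q = b \<and> (\<forall>x\<in>Q. h1 x = h2 x \<longrightarrow> h x = h1 x)"
proof -
  have "h1 p \<in> A" "h2 p \<in> A" "h1 q \<in> A" "h2 q \<in> A"
    using H_value_in_A h1 h2 p q by auto
  then obtain w where w: "w \<in> arity_part F 2" "w (tup2 (h1 p) (h2 p)) = a"
      "w (tup2 (h1 q) (h2 q)) = b" "\<forall>x\<in>A. w (tup2 x x) = x"
    using Delta2 ne a b unfolding Delta2_def by blast
  define h where "h = apply_op Q 2 w (\<lambda>i. if i = 0 then h1 else h2)"
  have "h \<in> H"
    unfolding h_def using Inv_apply_op[OF H_inv, of 2 w] w(1) h1 h2 unfolding arity_part_def by auto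
  moreover have val: "h x = w (tup2 (h1 x) (h2 x))" if "x \<in> Q" for x
    using that unfolding h_def apply_op_def tup2_def
    by (auto intro!: arg_cong[where f=w] restrict_ext)
  moreover have "h x = h1 x" if "x \<in> Q" "h1 x = h2 x" for x
    using val[OF that(1)] that w(4) H_value_in_A[OF h1 that(1)] by simp
  ultimately show ?thesis using val[OF p] val[OF q] w(2,3) by blast
qed

lemma Delta2_combine_constant:
  assumes e: "e \<in> H" "e r \<noteq> e p" and d: "d \<in> H" "d r = z" "d p = z"
    and "r \<in> Q" "p \<in> Q" "z \<noteq> e r" "z \<noteq> e p"
  shows "(\<exists>h\<in>H. h r = e r \<and> h p = z) \<and> (\<exists>h\<in>H. h r = z \<and> h p = e p)"
proof -
  have "{e r, d r} \<noteq> {e p, d p}" using assms by (auto simp: doubleton_eq_iff)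
  then show ?thesis
    using Delta2_combine[OF e(1) d(1) \<open>r \<in> Q\<close> \<open>p \<in> Q\<close>, of "e r" "d p"]
      Delta2_combine[OF e(1) d(1) \<open>r \<in> Q\<close> \<open>p \<in> Q\<close>, of "d r" "e p"] assms by auto
qed

lemma Delta2_pair_from_constants:
  assumes rQ: "r \<in> Q" and pQ: "p \<in> Q"
    and da: "da \<in> H" "da r = a" "da p = a"
    and db: "db \<in> H" "db r = b" "db p = b"
    and dc: "dc \<in> H" "dc r = c" "dc p = c"
    and e: "e \<in> H" "e r \<noteq> e p" and abc: "a \<noteq> b" "a \<noteq> c" "b \<noteq> c"
  shows "\<exists>h\<in>H. h r = a \<and> h p = b"
proof -
  have "\<exists>e'\<in>H. e' r = a \<and> e' p \<noteq> a"
  proof (cases "e r = a")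
    case True then show ?thesis using e by auto
  next
    case ra: False
    show ?thesis
    proof (cases "e p = a")
      case False
      then show ?thesis using Delta2_combine_constant[OF e da rQ pQ] ra by auto
    next
      case pa: True
      obtain z dz where z: "dz \<in> H" "dz r = z" "dz p = z" "z \<noteq> e r" "z \<noteq> a"
        using db dc abc by metis
      obtain h1 where h1: "h1 \<in> H" "h1 r = e r" "h1 p = z"
        using Delta2_combine_constant[OF e z(1-3) rQ pQ] z pa by auto
      then show ?thesis
        using Delta2_combine_constant[OF h1(1) _ da rQ pQ] z ra by auto
    qed
  qed
  then obtain e' where e': "e' \<in> H" "e' r = a" "e' p \<noteq> a" by blast
  show ?thesis
  proof (cases "e' p = b")
    case True then show ?thesis using e' by auto
  next
    case False
    then show ?thesis using Delta2_combine_constant[OF e'(1) _ db rQ pQ] e' abc by auto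
  qed
qed

text \<open>
  If \<open>f\<close> is not realised on \<open>S\<close> but \<open>h\<^sub>1\<close>, \<open>h\<^sub>2\<close> realise it off \<open>p\<close> and off \<open>q\<close>, then
  \<open>(h\<^sub>1, h\<^sub>2)\<close> takes the pairs \<open>(h\<^sub>1 p, f p)\<close> and \<open>(f q, h\<^sub>2 q)\<close> at \<open>p\<close> and \<open>q\<close>; if their ranges
  differed, \<open>\<Delta>\<^sup>2\<close> would combine \<open>h\<^sub>1, h\<^sub>2\<close> into an element realising \<open>f\<close> on \<open>S\<close>.
\<close>

lemma deletion_pairs_eq:
  assumes SQ: "S \<subseteq> Q" and "p \<in> S" "q \<in> S" "p \<noteq> q" and h1: "h1 \<in> H" and h2: "h2 \<in> H"
    and agree1: "\<forall>x\<in>S-{p}. h1 x = f x" and agree2: "\<forall>x\<in>S-{q}. h2 x = f x"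
    and N: "\<not> (\<exists>h\<in>H. \<forall>x\<in>S. h x = f x)"
  shows "{h1 p, f p} = {h2 q, f q}"
proof (rule ccontr)
  assume ne: "{h1 p, f p} \<noteq> {h2 q, f q}"
  have "h1 p \<noteq> f p" "h2 q \<noteq> f q"
    using not_realized_deletion_value[OF N] h1 h2 agree1 agree2 by auto
  moreover have "h2 p = f p" "h1 q = f q" using assms by auto
  moreover have "p \<in> Q" "q \<in> Q" using assms by auto
  ultimately obtain h where h: "h \<in> H" "h p = f p" "h q = f q"
      "\<forall>x\<in>Q. h1 x = h2 x \<longrightarrow> h x = h1 x"
    using Delta2_combine[OF h1 h2, of p q "f p" "f q"] ne by (auto simp: insert_commute)
  have "\<forall>x\<in>S. h x = f x"
    using h agree1 agree2 SQ by (metis Diff_iff insertE singletonD subsetD)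
  with N h(1) show False by blast
qed

end

locale minimal_counterexample = Delta2_relation +
  fixes S :: "'q set" and f :: "'q \<Rightarrow> 'a"
  assumes S_sub: "S \<subseteq> Q" and f_local: "locally_in A Q H S f"
    and f_not_realized: "\<not> (\<exists>h\<in>H. \<forall>x\<in>S. h x = f x)"
    and minimal: "\<And>S' f'. S' \<subset> S \<Longrightarrow> locally_in A Q H S' f' \<Longrightarrow> \<exists>h\<in>H. \<forall>x\<in>S'. h x = f' x"
begin

lemma f_pointwise: "q \<in> S \<Longrightarrow> \<exists>h\<in>H. h q = f q"
  using f_local unfolding locally_in_def by blast

lemma f_respects_identified: "p \<in> S \<Longrightarrow> q \<in> S \<Longrightarrow> \<forall>h\<in>H. h p = h q \<Longrightarrow> f p = f q"
  using f_local unfolding locally_in_def by blast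

lemma f_in_A: "x \<in> S \<Longrightarrow> f x \<in> A"
  using f_pointwise H_value_in_A S_sub by (metis subsetD)

lemma two_points: obtains p q where "p \<in> S" "q \<in> S" "p \<noteq> q"
proof -
  have "S \<noteq> {}" using f_not_realized H_nonempty by blast
  then obtain p where p: "p \<in> S" by blast
  moreover have "S \<noteq> {p}" using f_not_realized f_pointwise[OF p] by auto
  ultimately show ?thesis using that by blast
qed

lemma other_point:
  assumes "r \<in> S" obtains p where "p \<in> S" "p \<noteq> r"
  using two_points by metis

lemma deletion_witness: "p \<in> S \<Longrightarrow> \<exists>h\<in>H. \<forall>x\<in>S-{p}. h x = f x"
  using minimal[of "S - {p}" f] locally_in_mono[OF f_local] by blast

lemma deletion_value: "p \<in> S \<Longrightarrow> h \<in> H \<Longrightarrow> \<forall>x\<in>S-{p}. h x = f x \<Longrightarrow> h p \<noteq> f p"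
  using not_realized_deletion_value[OF f_not_realized] by blast

lemma deletion_pairs_uniform:
  assumes r: "r \<in> S" "hr \<in> H" "\<forall>x\<in>S-{r}. hr x = f x"
    and s: "s \<in> S" "hs \<in> H" "\<forall>x\<in>S-{s}. hs x = f x"
  shows "{hr r, f r} = {hs s, f s}"
proof (cases "r = s")
  case False
  then show ?thesis
    by (rule deletion_pairs_eq[OF S_sub r(1) s(1) _ r(2) s(2) r(3) s(3) f_not_realized])
next
  case True
  obtain q where q: "q \<in> S" "q \<noteq> r" by (rule other_point[OF r(1)])
  obtain hq where "hq \<in> H" "\<forall>x\<in>S-{q}. hq x = f x" using deletion_witness[OF q(1)] by blast
  then show ?thesis
    using deletion_pairs_eq[OF S_sub r(1) q(1) _ r(2) _ r(3) _ f_not_realized]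
      deletion_pairs_eq[OF S_sub s(1) q(1) _ s(2) _ s(3) _ f_not_realized] q True by metis
qed

lemma escape_point:
  obtains r g where "r \<in> S" "g \<in> H"
    "\<And>hr. hr \<in> H \<Longrightarrow> \<forall>x\<in>S-{r}. hr x = f x \<Longrightarrow> g r \<notin> {hr r, f r}"
proof -
  obtain q where q: "q \<in> S" using two_points by metis
  obtain hq where hq: "hq \<in> H" "\<forall>x\<in>S-{q}. hq x = f x" using deletion_witness[OF q] by blast
  define B where "B = {hq q, f q}"
  have "B \<in> ksubsets A 2"
    using deletion_value[OF q hq] H_value_in_A[OF hq(1)] f_in_A[OF q] q S_sub
    unfolding ksubsets_def B_def by auto
  then obtain h where "h \<in> H" "\<forall>x\<in>QB Q H B \<inter> S. h x = f x"
    using f_local unfolding locally_in_def by blast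
  then have "\<not> S \<subseteq> QB Q H B" using f_not_realized by blast
  then obtain r g where r: "r \<in> S" "g \<in> H" "g r \<notin> B"
    unfolding QB_def vals_def using S_sub by blast
  show ?thesis
  proof (rule that[OF r(1,2)])
    show "g r \<notin> {hr r, f r}" if "hr \<in> H" "\<forall>x\<in>S-{r}. hr x = f x" for hr
      using deletion_pairs_uniform[OF r(1) that q hq] r(3) unfolding B_def by simp
  qed
qed

text \<open>
  For the modification \<open>f(r := g r)\<close>, \<open>H(r)\<close> contains the three distinct values \<open>f r\<close>, \<open>h\<^sub>r r\<close>
  and \<open>g r\<close>, so \<open>r\<close> lies in no \<open>Q\<^sup>[\<^sup>B\<^sup>]\<^sub>H\<close> and is identified with no other point of \<open>S\<close>.
\<close>

lemma modified_locally_in: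
  assumes r: "r \<in> S" "hr \<in> H" "\<forall>x\<in>S-{r}. hr x = f x" and g: "g \<in> H" "g r \<notin> {hr r, f r}"
  shows "locally_in A Q H S (f(r := g r))"
  unfolding locally_in_def
proof (intro conjI ballI impI)
  have hrr: "hr r \<noteq> f r" using deletion_value r by blast
  show "\<exists>h\<in>H. h q = (f(r := g r)) q" if "q \<in> S" for q
    using f_pointwise[OF that] g(1) by auto
  show "(f(r := g r)) p = (f(r := g r)) q"
    if pq: "p \<in> S" "q \<in> S" "\<forall>h\<in>H. h p = h q" for p q
  proof -
    have not_identified: "\<not> (\<forall>h\<in>H. h x = h r)" if "x \<in> S" "x \<noteq> r" for x
      using f_respects_identified[OF that(1) r(1)] r(2,3) that hrr by force
    have "p = q \<or> p \<noteq> r \<and> q \<noteq> r" using not_identified pq by metis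
    then show ?thesis using f_respects_identified[OF pq] by auto
  qed
  show "\<exists>h\<in>H. \<forall>x\<in>QB Q H B \<inter> S. h x = (f(r := g r)) x" if B: "B \<in> ksubsets A 2" for B
  proof -
    obtain h where h: "h \<in> H" "\<forall>x\<in>QB Q H B \<inter> S. h x = f x"
      using f_local B unfolding locally_in_def by blast
    obtain h0 where "h0 \<in> H" "h0 r = f r" using f_pointwise[OF r(1)] by blast
    then have vals_r: "f r \<in> vals H r" "hr r \<in> vals H r" "g r \<in> vals H r"
      using g(1) r(2) unfolding vals_def by (auto intro: rev_image_eqI)
    have "\<not> vals H r \<subseteq> B"
    proof
      assume "vals H r \<subseteq> B"
      then have "f r \<in> B" "hr r \<in> B" "g r \<in> B" using vals_r by blast+
      then show False using three_in_card_two[of B] B hrr g(2) unfolding ksubsets_def by auto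
    qed
    then have "r \<notin> QB Q H B" unfolding QB_def by blast
    then show ?thesis using h by auto
  qed
qed

lemma modified_not_realized:
  assumes r: "r \<in> S" "hr \<in> H" "\<forall>x\<in>S-{r}. hr x = f x" and g: "g \<in> H" "g r \<notin> {hr r, f r}"
  shows "\<not> (\<exists>h\<in>H. \<forall>x\<in>S. h x = (f(r := g r)) x)"
proof
  assume "\<exists>h\<in>H. \<forall>x\<in>S. h x = (f(r := g r)) x"
  then obtain h where h: "h \<in> H" "\<forall>x\<in>S. h x = (f(r := g r)) x" by blast
  then have "h r = g r" "\<forall>x\<in>S-{r}. h x = f x" using r(1) by auto
  then show False using deletion_pairs_uniform[OF r(1) h(1) _ r] g(2) by auto
qed

text \<open>\<open>f(r := g r)\<close> is again a minimal counterexample; compare its deletion witnesses at \<open>p\<close> and \<open>r\<close>.\<close>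

lemma modification_consequences:
  assumes r: "r \<in> S" "hr \<in> H" "\<forall>x\<in>S-{r}. hr x = f x" and g: "g \<in> H" "g r \<notin> {hr r, f r}"
    and p: "p \<in> S" "p \<noteq> r"
  shows "f p = hr r \<and> (\<exists>g'\<in>H. g' p = g r \<and> g' r = g r)"
proof -
  define f' where "f' = f(r := g r)"
  have N': "\<not> (\<exists>h\<in>H. \<forall>x\<in>S. h x = f' x)"
    unfolding f'_def by (rule modified_not_realized[OF r g])
  have "locally_in A Q H (S - {p}) f'"
    unfolding f'_def using modified_locally_in[OF r g] by (rule locally_in_mono) blast
  then obtain h' where h': "h' \<in> H" "\<forall>x\<in>S-{p}. h' x = f' x"
    using minimal[of "S - {p}" f'] p(1) by blast
  have "\<forall>x\<in>S-{r}. hr x = f' x" using r(3) unfolding f'_def by auto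
  then have "{h' p, f' p} = {hr r, f' r}"
    by (rule deletion_pairs_eq[OF S_sub p(1) r(1) p(2) h'(1) r(2) h'(2) _ N'])
  then have E: "{h' p, f p} = {hr r, g r}" using p(2) unfolding f'_def by simp
  obtain hp where hp: "hp \<in> H" "\<forall>x\<in>S-{p}. hp x = f x" using deletion_witness[OF p(1)] by blast
  have "f p \<in> {hr r, f r}" unfolding deletion_pairs_uniform[OF p(1) hp r(1-3), symmetric] by simp
  then have "f p \<noteq> g r" using g(2) by metis
  then have "f p = hr r" "h' p = g r" using E g(2) by (auto simp: doubleton_eq_iff)
  moreover have "h' r = g r" using h' r(1) p(2) unfolding f'_def by auto
  ultimately show ?thesis using h'(1) by blast
qed

theorem contradiction: False
proof -
  obtain r g where r: "r \<in> S" "g \<in> H"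
    and g: "\<And>hr. hr \<in> H \<Longrightarrow> \<forall>x\<in>S-{r}. hr x = f x \<Longrightarrow> g r \<notin> {hr r, f r}"
    using escape_point by metis
  obtain hr where hr: "hr \<in> H" "\<forall>x\<in>S-{r}. hr x = f x" using deletion_witness[OF r(1)] by blast
  obtain p where p: "p \<in> S" "p \<noteq> r" by (rule other_point[OF r(1)])
  obtain g' where g': "g' \<in> H" "g' p = g r" "g' r = g r" and fp: "f p = hr r"
    using modification_consequences[OF r(1) hr r(2) g[OF hr] p] by blast
  obtain hp where hp: "hp \<in> H" "\<forall>x\<in>S-{p}. hp x = f x" using deletion_witness[OF p(1)] by blast
  have "{hp p, f p} = {hr r, f r}" by (rule deletion_pairs_uniform[OF p(1) hp r(1) hr])
  then have g'p: "g' p \<notin> {hp p, f p}" using g[OF hr] g'(2) by simp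
  have f_off_p: "f s = hp p" if "s \<in> S" "s \<noteq> p" for s
    using modification_consequences[OF p(1) hp g'(1) g'p that] by blast
  have hpp: "hp p \<noteq> f p" by (rule deletion_value[OF p(1) hp])
  show False
  proof (cases "S = {r, p}")
    case False
    then obtain s where s: "s \<in> S" "s \<noteq> r" "s \<noteq> p" using r(1) p(1) by blast
    have "f s = hr r" using modification_consequences[OF r(1) hr r(2) g[OF hr] s(1,2)] by blast
    moreover have "f s = hp p" using f_off_p s(1,3) .
    ultimately show False using fp hpp by simp
  next
    case S: True
    have frp: "hp p = f r" using f_off_p r(1) p(2) by simp
    then have "f r \<noteq> f p" using hpp by simp
    then obtain e where e: "e \<in> H" "e r \<noteq> e p"
      using f_respects_identified[OF r(1) p(1)] by blast
    have "hp r = f r" "hr p = f p" using hp hr r(1) p by auto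
    moreover have "g r \<noteq> f r" "g r \<noteq> f p" using g[OF hr] fp by auto
    moreover have "r \<in> Q" "p \<in> Q" using S_sub r(1) p(1) by auto
    ultimately have "\<exists>h\<in>H. h r = f r \<and> h p = f p"
      using Delta2_pair_from_constants[OF _ _ hp(1) _ frp hr(1) fp[symmetric] _ g'(1) g'(3,2) e]
        \<open>f r \<noteq> f p\<close> by auto
    then show False using f_not_realized S by auto
  qed
qed

end

context Delta2_relation
begin

lemma locally_in_realized:
  assumes "finite S" "S \<subseteq> Q" "locally_in A Q H S f"
  shows "\<exists>h\<in>H. \<forall>x\<in>S. h x = f x"
  using assms
proof (induction "card S" arbitrary: S f rule: less_induct)
  case less
  show ?case
  proof (rule ccontr)
    assume N: "\<not> (\<exists>h\<in>H. \<forall>x\<in>S. h x = f x)"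
    have "\<exists>h\<in>H. \<forall>x\<in>S'. h x = f' x" if "S' \<subset> S" "locally_in A Q H S' f'" for S' f'
      using less that by (meson finite_subset order.trans psubset_card_mono psubset_imp_subset)
    then interpret minimal_counterexample A Q H F S f
      using less.prems N by unfold_locales auto
    show False by (rule contradiction)
  qed
qed

lemma decomposable_canonical:
  assumes "finite Q"
  shows "decomposable A Q H (ksubsets Q 1 \<union> id_pairs Q H \<union> {QB Q H B | B. B \<in> ksubsets A 2})"
    (is "decomposable A Q H ?RR")
  unfolding decomposable_def
proof (rule equalityI)
  show "H \<subseteq> (Q \<rightarrow>\<^sub>E A) \<inter> (\<Inter>R\<in>?RR. ext_set A Q H R)"
    using H_sub unfolding ext_set_def restr_set_def by blast
  show "(Q \<rightarrow>\<^sub>E A) \<inter> (\<Inter>R\<in>?RR. ext_set A Q H R) \<subseteq> H"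
  proof
    fix f assume f: "f \<in> (Q \<rightarrow>\<^sub>E A) \<inter> (\<Inter>R\<in>?RR. ext_set A Q H R)"
    have agree: "\<exists>h\<in>H. \<forall>x\<in>R. h x = f x" if "R \<in> ?RR" for R
      using f that by (intro ext_set_obtain_agreeing) blast
    have "locally_in A Q H Q f"
      unfolding locally_in_def
    proof (intro conjI ballI impI)
      show "\<exists>h\<in>H. h q = f q" if "q \<in> Q" for q
        using agree[of "{q}"] that unfolding ksubsets_def by auto
      show "f p = f q" if "p \<in> Q" "q \<in> Q" "\<forall>h\<in>H. h p = h q" for p q
      proof (cases "p = q")
        case False
        then have "{p, q} \<in> id_pairs Q H"
          using that unfolding id_pairs_def ksubsets_def by auto
        then show ?thesis using agree[of "{p, q}"] that by force
      qed simp
      show "\<exists>h\<in>H. \<forall>x\<in>QB Q H B \<inter> Q. h x = f x" if "B \<in> ksubsets A 2" for B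
        using agree[of "QB Q H B"] that by blast
    qed
    then obtain h where "h \<in> H" "\<forall>x\<in>Q. h x = f x"
      using locally_in_realized[OF assms] by blast
    moreover have "f = h"
      using f \<open>h \<in> H\<close> H_sub calculation(2) by (intro PiE_ext[of f Q "\<lambda>_. A" h]) auto
    ultimately show "f \<in> H" by simp
  qed
qed

end

lemma canonical_piece_subset:
  "P \<in> ksubsets Q 1 \<union> {QB Q H B | B. B \<in> ksubsets A 2} \<Longrightarrow> P \<subseteq> Q"
  unfolding ksubsets_def QB_def by auto

lemma Inv_if_canonical_pieces:
  assumes FA: "F \<subseteq> OA A" and HQ: "H \<subseteq> Q \<rightarrow>\<^sub>E A"
    and pieces: "\<forall>P \<in> ksubsets Q 1 \<union> {QB Q H B | B. B \<in> ksubsets A 2}. restr_set H P \<in> Inv A P F"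
    and dec: "decomposable A Q H (ksubsets Q 1 \<union> id_pairs Q H \<union> {QB Q H B | B. B \<in> ksubsets A 2})"
  shows "H \<in> Inv A Q F"
proof (rule Inv_if_decomposable[OF FA HQ dec])
  fix R assume R: "R \<in> ksubsets Q 1 \<union> id_pairs Q H \<union> {QB Q H B | B. B \<in> ksubsets A 2}"
  show "R \<subseteq> Q \<and> restr_set H R \<in> Inv A R F"
  proof (cases "R \<in> id_pairs Q H")
    case True
    then obtain p q where pq: "R = {p, q}" "p \<in> Q" "q \<in> Q" "\<forall>h\<in>H. h p = h q"
      unfolding id_pairs_def ksubsets_def by (auto simp: card_2_iff)
    moreover have "restr_set H {p} \<in> Inv A {p} F"
      using pieces \<open>p \<in> Q\<close> unfolding ksubsets_def by auto
    ultimately show ?thesis using Inv_restr_set_identified_pair[OF _ HQ] by simp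
  next
    case False
    then have "R \<in> ksubsets Q 1 \<union> {QB Q H B | B. B \<in> ksubsets A 2}" using R by blast
    then show ?thesis using pieces canonical_piece_subset by blast
  qed
qed

theorem theorem3:
  fixes A :: "'a set" and Q :: "'q set" and H :: "('q \<Rightarrow> 'a) set"
    and F :: "(nat \<times> ((nat \<Rightarrow> 'a) \<Rightarrow> 'a)) set"
  assumes "finite A" "A \<noteq> {}" "finite Q" "Q \<noteq> {}"
    and "finite H" "H \<noteq> {}" "H \<subseteq> (Q \<rightarrow>\<^sub>E A)"
    and "clone A F" "Delta2 A F"
  shows "H \<in> Inv A Q F \<longleftrightarrow>
    ((\<forall>P \<in> ksubsets Q 1 \<union> {QB Q H B | B. B \<in> ksubsets A 2}.
        restr_set H P \<in> Inv A P F)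
     \<and> decomposable A Q H (ksubsets Q 1 \<union> id_pairs Q H \<union> {QB Q H B | B. B \<in> ksubsets A 2}))"
  (is "_ \<longleftrightarrow> (\<forall>P \<in> ?PP. _) \<and> decomposable A Q H ?RR")
proof
  assume inv: "H \<in> Inv A Q F"
  then interpret Delta2_relation A Q H F
    using assms by unfold_locales
  show "(\<forall>P \<in> ?PP. restr_set H P \<in> Inv A P F) \<and> decomposable A Q H ?RR"
    using decomposable_canonical[OF assms(3)] by (simp add: Inv_restr_set[OF inv canonical_piece_subset])
next
  assume pieces: "(\<forall>P \<in> ?PP. restr_set H P \<in> Inv A P F) \<and> decomposable A Q H ?RR"
  have "F \<subseteq> OA A" using assms(8) unfolding clone_def by blast
  then show "H \<in> Inv A Q F"
    using Inv_if_canonical_pieces[OF _ assms(7) conjunct1[OF pieces] conjunct2[OF pieces]] by blast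
qed

end
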